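(* Let $\mathbf{A}=[\mathbf{a}_1,\dots,\mathbf{a}_L]\in\mathbb{C}^{N\times L}$ have unit-norm columns, and let $\mu=\max_{p\neq q}|\langle \mathbf{a}_p,\mathbf{a}_q\rangle|$ be its mutual coherence, assumed to satisfy $\mu>0$. Let $K$ be a positive integer with $K<\tfrac12(\mu^{-1}+1)$, let $\mathcal{S}\subset\{1,\dots,L\}$ with $|\mathcal{S}|=K$, and let $\mathbf{x}\in\mathbb{C}^L$ be given by $x_i=1$ for $i\in\mathcal{S}$ and $x_i=0$ otherwise (the case $M=1$, i.e. constellation $\mathcal{B}=\{1\}$). Let the observation be noiseless, $\mathbf{y}=\mathbf{A}\mathbf{x}=\sum_{i\in\mathcal{S}}\mathbf{a}_i$. Then the Match and Decode (MAD) algorithm with $M=1$ (defined in the context), run with inputs $\mathbf{A},\mathbf{y},K$ and no partial information, outputs $\hat{\mathbf{x}}^{(K)}=\mathbf{x}$; in particular the recovered codeword $\hat{\mathbf{s}}=\mathbf{A}\hat{\mathbf{x}}^{(K)}$ equals the transmitted codeword $\mathbf{s}=\mathbf{A}\mathbf{x}$.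
   Context: Inner product: $\langle \mathbf{u},\mathbf{v}\rangle=\mathbf{v}^*\mathbf{u}$ on $\mathbb{C}^N$. MAD algorithm with $M=1$ (constellation $\mathcal{B}=\{1\}$): initialize $t=0$, $\hat{\mathcal{S}}=\emptyset$, residual $\mathbf{r}^{(0)}=\mathbf{y}$, estimate $\hat{\mathbf{x}}^{(0)}=\mathbf{0}$. While $t<K$: compute $c_i=\langle \mathbf{r}^{(t)},\mathbf{a}_i\rangle$ for $i\notin\hat{\mathcal{S}}$ and the metric $p_i=\mathrm{Re}\{c_i\}-\tfrac12$; select $\hat i=\arg\max_{i\notin\hat{\mathcal{S}}}p_i$; update $\hat{\mathcal{S}}\leftarrow\hat{\mathcal{S}}\cup\{\hat i\}$, $\hat{\mathbf{x}}^{(t+1)}=\hat{\mathbf{x}}^{(t)}+\mathbf{e}_{\hat i}$ ($\mathbf{e}_n$ the $n$-th standard basis vector of $\mathbb{C}^L$), $\mathbf{r}^{(t+1)}=\mathbf{r}^{(t)}-\mathbf{a}_{\hat i}$, and $t\leftarrow t+1$. Output $\hat{\mathbf{x}}^{(K)}$. *)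

theory Defs
  imports "HOL-Analysis.Analysis"
begin

text \<open>Vectors of C^N are modelled as complex^'n ('n a finite index type, N = CARD('n)).
  The dictionary A = [a_1,...,a_L] is a function from column indices {1..L} to complex^'n.
  Vectors of C^L are functions nat => complex, only meaningful on {1..L}.\<close>

definition cinner :: "complex^'n \<Rightarrow> complex^'n \<Rightarrow> complex" where
  "cinner u v = (\<Sum>j\<in>UNIV. cnj (v $ j) * u $ j)"

definition mutual_coherence :: "(nat \<Rightarrow> complex^'n) \<Rightarrow> nat \<Rightarrow> real" where
  "mutual_coherence A L =
     Max ((\<lambda>(p,q). cmod (cinner (A p) (A q))) ` {(p,q). p \<in> {1..L} \<and> q \<in> {1..L} \<and> p \<noteq> q})"

definition mat_vec :: "(nat \<Rightarrow> complex^'n) \<Rightarrow> nat \<Rightarrow> (nat \<Rightarrow> complex) \<Rightarrow> complex^'n" where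
  "mat_vec A L x = (\<Sum>i=1..L. x i *s A i)"

definition std_basis :: "nat \<Rightarrow> nat \<Rightarrow> complex" where
  "std_basis n = (\<lambda>k. if k = n then 1 else 0)"

definition mad_sel :: "nat list \<Rightarrow> nat \<Rightarrow> nat set" where
  "mad_sel is t = set (take t is)"

definition mad_xhat :: "nat list \<Rightarrow> nat \<Rightarrow> nat \<Rightarrow> complex" where
  "mad_xhat is t = (\<lambda>k. (\<Sum>s\<leftarrow>take t is. std_basis s k))"

definition mad_res :: "(nat \<Rightarrow> complex^'n) \<Rightarrow> complex^'n \<Rightarrow> nat list \<Rightarrow> nat \<Rightarrow> complex^'n" where
  "mad_res A y is t = y - (\<Sum>s\<leftarrow>take t is. A s)"

definition mad_metric :: "(nat \<Rightarrow> complex^'n) \<Rightarrow> complex^'n \<Rightarrow> nat \<Rightarrow> real" where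
  "mad_metric A r i = Re (cinner r (A i)) - 1/2"

text \<open>A (possible) run of MAD with M = 1: the list of indices selected in iterations
  t = 0..K-1, each being an argmax (any tie-breaking) of the metric over the unselected indices.\<close>
definition mad_run :: "(nat \<Rightarrow> complex^'n) \<Rightarrow> nat \<Rightarrow> complex^'n \<Rightarrow> nat \<Rightarrow> nat list \<Rightarrow> bool" where
  "mad_run A L y K is \<longleftrightarrow> length is = K \<and>
     (\<forall>t<K. is ! t \<in> {1..L} - mad_sel is t \<and>
        (\<forall>j \<in> {1..L} - mad_sel is t.
           mad_metric A (mad_res A y is t) j \<le> mad_metric A (mad_res A y is t) (is ! t)))"

end

theory Submission
  imports Defs
begin

text \<open>As long as the residual is the sum of the columns of a nonempty set R of still
  undetected support indices, each of them has metric at least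
  1 - (|R| - 1)\<mu> - 1/2 and every off-support column at most |R|\<mu> - 1/2.
  Since |R| \<le> K and (2K - 1)\<mu> < 1, the greedy choice therefore always lies in R;
  after K steps the whole support has been selected, each index exactly once.\<close>

lemma cinner_sum_left: "cinner (sum f F) v = (\<Sum>i\<in>F. cinner (f i) v)"
  unfolding cinner_def by (simp add: sum_distrib_left sum.swap[of _ F])

lemma cinner_self_eq_norm_square: "cinner u u = complex_of_real ((norm u)\<^sup>2)"
proof -
  have "(norm u)\<^sup>2 = (\<Sum>j\<in>UNIV. (cmod (u $ j))\<^sup>2)"
    unfolding norm_vec_def L2_set_def by (simp add: sum_nonneg)
  hence "complex_of_real ((norm u)\<^sup>2) = (\<Sum>j\<in>UNIV. complex_of_real ((cmod (u $ j))\<^sup>2))"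
    by simp
  also have "\<dots> = cinner u u" unfolding cinner_def
    by (rule sum.cong) (auto simp flip: of_real_power simp: complex_norm_square mult.commute)
  finally show ?thesis by simp
qed

lemma cmod_cinner_le_mutual_coherence:
  assumes "p \<in> {1..L}" "q \<in> {1..L}" "p \<noteq> q"
  shows "cmod (cinner (A p) (A q)) \<le> mutual_coherence A L"
proof -
  have fin: "finite {(p, q). p \<in> {1..L} \<and> q \<in> {1..L} \<and> p \<noteq> (q::nat)}"
    by (rule finite_subset[of _ "{1..L} \<times> {1..L}"]) auto
  show ?thesis unfolding mutual_coherence_def
    by (rule Max_ge) (use fin assms in auto)
qed

lemma Re_cinner_sum_ge:
  assumes "finite R" "j \<in> R" "norm (A j) = 1"
    and coh: "\<forall>i\<in>R - {j}. cmod (cinner (A i) (A j)) \<le> \<mu>"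
  shows "1 - (real (card R) - 1) * \<mu> \<le> Re (cinner (sum A R) (A j))"
proof -
  have "real (card (R - {j})) * (- \<mu>) \<le> (\<Sum>i\<in>R - {j}. Re (cinner (A i) (A j)))"
    using coh abs_Re_le_cmod by (intro sum_bounded_below) (smt (verit))
  moreover have "real (card (R - {j})) = real (card R) - 1"
    using assms(1,2) by (cases "card R") (auto simp: card_Diff_singleton)
  moreover have "Re (cinner (A j) (A j)) = 1"
    using assms(3) by (simp add: cinner_self_eq_norm_square)
  ultimately show ?thesis
    using sum.remove[OF assms(1,2), of "\<lambda>i. Re (cinner (A i) (A j))"]
    by (simp add: cinner_sum_left algebra_simps)
qed

lemma Re_cinner_sum_le:
  assumes coh: "\<forall>i\<in>R. cmod (cinner (A i) (A j)) \<le> \<mu>"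
  shows "Re (cinner (sum A R) (A j)) \<le> real (card R) * \<mu>"
proof -
  have "(\<Sum>i\<in>R. Re (cinner (A i) (A j))) \<le> real (card R) * \<mu>"
    using coh abs_Re_le_cmod by (intro sum_bounded_above) (smt (verit))
  then show ?thesis by (simp add: cinner_sum_left)
qed

lemma mad_metric_off_support_less:
  assumes unit: "\<forall>i\<in>{1..L}. norm (A i) = 1"
    and coh: "\<forall>p\<in>{1..L}. \<forall>q\<in>{1..L}. p \<noteq> q \<longrightarrow> cmod (cinner (A p) (A q)) \<le> \<mu>"
    and R: "R \<subseteq> {1..L}" "j \<in> R" and i: "i \<in> {1..L}" "i \<notin> R"
    and small: "(2 * real (card R) - 1) * \<mu> < 1"
  shows "mad_metric A (sum A R) i < mad_metric A (sum A R) j"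
proof -
  have "finite R" using R(1) finite_subset by blast
  then have "1 - (real (card R) - 1) * \<mu> \<le> Re (cinner (sum A R) (A j))"
    by (rule Re_cinner_sum_ge) (use R unit coh in auto)
  moreover have "Re (cinner (sum A R) (A i)) \<le> real (card R) * \<mu>"
  proof (rule Re_cinner_sum_le, intro ballI)
    fix k assume "k \<in> R"
    with R(1) i show "cmod (cinner (A k) (A i)) \<le> \<mu>"
      using coh[rule_format, of k i] by blast
  qed
  ultimately show ?thesis
    using small unfolding mad_metric_def by (simp add: algebra_simps)
qed

lemma mad_argmax_in_support:
  assumes unit: "\<forall>i\<in>{1..L}. norm (A i) = 1"
    and coh: "\<forall>p\<in>{1..L}. \<forall>q\<in>{1..L}. p \<noteq> q \<longrightarrow> cmod (cinner (A p) (A q)) \<le> \<mu>"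
    and R: "R \<subseteq> C" "C \<subseteq> {1..L}" "R \<noteq> {}"
    and small: "(2 * real (card R) - 1) * \<mu> < 1"
    and i: "i \<in> C" "\<forall>j\<in>C. mad_metric A (sum A R) j \<le> mad_metric A (sum A R) i"
  shows "i \<in> R"
proof (rule ccontr)
  assume "i \<notin> R"
  obtain j where "j \<in> R" using R(3) by blast
  have "mad_metric A (sum A R) i < mad_metric A (sum A R) j"
    using R(1,2) \<open>j \<in> R\<close> i(1) \<open>i \<notin> R\<close> small
    by (intro mad_metric_off_support_less[OF unit coh]) blast+
  moreover have "mad_metric A (sum A R) j \<le> mad_metric A (sum A R) i"
    using i(2) \<open>j \<in> R\<close> R(1) by blast
  ultimately show False by linarith
qed

lemma mad_run_snoc:
  assumes run: "mad_run A L y t xs"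
    and i: "i \<in> {1..L} - set xs"
    and max: "\<forall>j\<in>{1..L} - set xs. mad_metric A (mad_res A y xs t) j \<le> mad_metric A (mad_res A y xs t) i"
  shows "mad_run A L y (Suc t) (xs @ [i])"
proof -
  have len: "length xs = t" using run by (simp add: mad_run_def)
  have "take t' (xs @ [i]) = take t' xs" if "t' \<le> t" for t'
    using len that by simp
  moreover have "(xs @ [i]) ! t' = xs ! t'" if "t' < t" for t'
    using len that by (simp add: nth_append)
  ultimately show ?thesis
    using run i max len unfolding mad_run_def mad_sel_def mad_res_def
    by (auto simp: less_Suc_eq nth_append)
qed

lemma mad_run_exists:
  assumes "K \<le> L"
  shows "\<exists>xs. mad_run A L y K xs"
  using assms
proof (induction K)
  case 0
  then show ?case by (simp add: mad_run_def)
next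
  case (Suc t)
  then obtain xs where run: "mad_run A L y t xs" by auto
  define F where "F = {1..L} - set xs"
  define g where "g = mad_metric A (mad_res A y xs t)"
  have "card (set xs) < card {1..L}"
    using run Suc.prems card_length[of xs] by (simp add: mad_run_def)
  then have "F \<noteq> {}"
    unfolding F_def by (metis Diff_eq_empty_iff card_mono List.finite_set leD)
  then have "Max (g ` F) \<in> g ` F"
    unfolding F_def by (intro Max_in) auto
  then obtain i where "i \<in> F" "g i = Max (g ` F)" by auto
  then have "\<forall>j\<in>F. g j \<le> g i" unfolding F_def by simp
  with \<open>i \<in> F\<close> have "mad_run A L y (Suc t) (xs @ [i])"
    using run unfolding F_def g_def by (intro mad_run_snoc)
  then show ?case ..
qed

lemma mad_res_eq_sum_remaining:
  assumes "distinct (take t xs)" "set (take t xs) \<subseteq> S" "finite S"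
  shows "mad_res A (sum A S) xs t = sum A (S - set (take t xs))"
  using assms
  by (simp add: mad_res_def sum_list_distinct_conv_sum_set sum_diff finite_subset)

lemma mad_xhat_distinct:
  assumes "distinct xs"
  shows "mad_xhat xs (length xs) k = (if k \<in> set xs then 1 else 0)"
  using assms by (simp add: mad_xhat_def std_basis_def sum_list_distinct_conv_sum_set)

lemma mat_vec_indicator:
  assumes "S \<subseteq> {1..L}"
  shows "mat_vec A L (\<lambda>i. if i \<in> S then 1 else 0) = sum A S"
proof -
  have "mat_vec A L (\<lambda>i. if i \<in> S then 1 else 0) = (\<Sum>i\<in>{1..L}. if i \<in> S then A i else 0)"
    unfolding mat_vec_def by (rule sum.cong) auto
  also have "\<dots> = sum A ({1..L} \<inter> S)" by (simp add: sum.inter_restrict)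
  also have "{1..L} \<inter> S = S" using assms by blast
  finally show ?thesis .
qed

lemma mad_run_selects_support:
  assumes unit: "\<forall>i\<in>{1..L}. norm (A i) = 1"
    and coh: "\<forall>p\<in>{1..L}. \<forall>q\<in>{1..L}. p \<noteq> q \<longrightarrow> cmod (cinner (A p) (A q)) \<le> \<mu>"
    and \<mu>: "\<mu> \<ge> 0" "(2 * real K - 1) * \<mu> < 1"
    and S: "S \<subseteq> {1..L}" "card S = K"
    and run: "mad_run A L (sum A S) K xs"
  shows "distinct xs \<and> set xs = S"
proof -
  have finS: "finite S" using S(1) finite_subset by blast
  have len: "length xs = K" using run by (simp add: mad_run_def)
  have "distinct (take t xs) \<and> set (take t xs) \<subseteq> S" if "t \<le> K" for t
    using that
  proof (induction t)
    case 0
    then show ?case by simp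
  next
    case (Suc t)
    then have tK: "t < K" and IH: "distinct (take t xs)" "set (take t xs) \<subseteq> S" by auto
    define R where "R = S - set (take t xs)"
    have cR: "card R = K - t"
      using IH len tK S(2) finS unfolding R_def by (simp add: card_Diff_subset distinct_card)
    have sel: "xs ! t \<in> {1..L} - set (take t xs)"
      and max: "\<forall>j\<in>{1..L} - set (take t xs). mad_metric A (sum A R) j \<le> mad_metric A (sum A R) (xs ! t)"
      using run tK mad_res_eq_sum_remaining[OF IH finS, of A]
      unfolding mad_run_def mad_sel_def R_def by auto
    have "(2 * real (card R) - 1) * \<mu> \<le> (2 * real K - 1) * \<mu>"
      using cR tK \<mu>(1) by (intro mult_right_mono) auto
    then have small: "(2 * real (card R) - 1) * \<mu> < 1" using \<mu>(2) by linarith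
    have "xs ! t \<in> R"
    proof (rule mad_argmax_in_support[OF unit coh _ _ _ small sel max])
      show "R \<subseteq> {1..L} - set (take t xs)" "{1..L} - set (take t xs) \<subseteq> {1..L}"
        using S(1) by (auto simp: R_def)
      show "R \<noteq> {}" using cR tK by fastforce
    qed
    then have "xs ! t \<in> S" by (simp add: R_def)
    then show ?case
      using IH sel tK len by (simp add: take_Suc_conv_app_nth)
  qed
  from this[of K] len have "distinct xs" "set xs \<subseteq> S" by auto
  moreover from this have "card (set xs) = card S" using len S(2) by (simp add: distinct_card)
  ultimately show ?thesis using card_subset_eq[OF finS] by blast
qed

theorem lemma1:
  fixes A :: "nat \<Rightarrow> complex^'n" and L K :: nat and S :: "nat set"
    and x :: "nat \<Rightarrow> complex" and y :: "complex^'n"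
  assumes unit: "\<forall>i\<in>{1..L}. norm (A i) = 1"
    and mu_pos: "mutual_coherence A L > 0"
    and K_pos: "K > 0"
    and K_bound: "real K < (1 / mutual_coherence A L + 1) / 2"
    and S_sub: "S \<subseteq> {1..L}" and S_card: "card S = K"
    and x_def: "x = (\<lambda>i. if i \<in> S then 1 else 0)"
    and y_def: "y = mat_vec A L x"
  shows "(\<exists>is. mad_run A L y K is) \<and>
         (\<forall>is. mad_run A L y K is \<longrightarrow>
            (\<forall>k\<in>{1..L}. mad_xhat is K k = x k) \<and>
            mat_vec A L (mad_xhat is K) = mat_vec A L x)"
proof (intro conjI allI impI)
  have "K \<le> L" using S_sub S_card card_mono[of "{1..L}" S] by simp
  then show "\<exists>xs. mad_run A L y K xs" by (rule mad_run_exists)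
next
  fix xs assume run: "mad_run A L y K xs"
  have small: "(2 * real K - 1) * mutual_coherence A L < 1"
    using K_bound mu_pos by (simp add: field_simps)
  have coh: "\<forall>p\<in>{1..L}. \<forall>q\<in>{1..L}. p \<noteq> q \<longrightarrow>
      cmod (cinner (A p) (A q)) \<le> mutual_coherence A L"
    using cmod_cinner_le_mutual_coherence by blast
  have "distinct xs \<and> set xs = S"
    using run unfolding y_def x_def mat_vec_indicator[OF S_sub]
    by (intro mad_run_selects_support[OF unit coh _ small S_sub S_card]) (use mu_pos in simp)
  moreover have "length xs = K" using run by (simp add: mad_run_def)
  ultimately have xhat: "mad_xhat xs K = x"
    using mad_xhat_distinct[of xs] x_def by auto
  then show "\<forall>k\<in>{1..L}. mad_xhat xs K k = x k" by simp
  show "mat_vec A L (mad_xhat xs K) = mat_vec A L x" using xhat by simp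
qed

end
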